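(* Let $\mathcal A\in\mathbb C^{n\times n}$ be nonsingular and suppose $\mathcal A=\mathcal P_1+\mathcal P_2$ with $\mathcal P_1,\mathcal P_2$ positive semidefinite, and let $\Sigma$ be Hermitian positive definite. Let $\tilde{\mathcal A}=\Sigma^{-1/2}\mathcal A\Sigma^{-1/2}$ and, for $x\in\mathbb C^n$, $$r_1(x):=x^*\big(\mathcal I+\tilde{\mathcal A}^*\tilde{\mathcal A}+\tilde{\mathcal P}_2\tilde{\mathcal P}_1+\tilde{\mathcal P}_1^*\tilde{\mathcal P}_2^*+\tilde{\mathcal P}_1^*\tilde{\mathcal P}_2^*\tilde{\mathcal P}_2\tilde{\mathcal P}_1\big)x,\qquad r_2(x):=x^*\big(\tilde{\mathcal A}+\tilde{\mathcal A}^*+\tilde{\mathcal A}^*\tilde{\mathcal P}_2\tilde{\mathcal P}_1+\tilde{\mathcal P}_1^*\tilde{\mathcal P}_2^*\tilde{\mathcal A}\big)x.$$ Then for all $x_\lambda\in\mathrm{ev}(\tilde{\mathcal P}_+^{-1}\tilde{\mathcal P}_-)$ we have $r_1(x_\lambda)\ge r_2(x_\lambda)\ge 0$ and $r_1(x_\lambda)>0$, and $$\rho(\Gamma_{\mathrm{PPS}})=\max_{x_\lambda\in\mathrm{ev}(\tilde{\mathcal P}_+^{-1}\tilde{\mathcal P}_-)}\sqrt{\frac{r_1(x_\lambda)-r_2(x_\lambda)}{r_1(x_\lambda)+r_2(x_\lambda)}}.$$ In particular, $\rho(\Gamma_{\mathrm{PPS}})<1$ if and only if $r_2(x_\lambda)\ne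 0$ for all $x_\lambda\in\mathrm{ev}(\tilde{\mathcal P}_+^{-1}\tilde{\mathcal P}_-)$.
   Context: A matrix $\mathcal P\in\mathbb C^{n\times n}$ is called positive semidefinite if $\mathcal P+\mathcal P^*$ is Hermitian positive semidefinite, and positive definite if $\mathcal P+\mathcal P^*$ is Hermitian positive definite; $\mathcal P$ need not be Hermitian. $\mathcal I$ is the identity, $\rho(\cdot)$ the spectral radius, and $\mathrm{ev}(M)$ the set of all nonzero eigenvectors of a square matrix $M$. For HPD $\Sigma$, $\Sigma^{1/2}$ is its HPD square root. The PPS iteration matrix is $\Gamma_{\mathrm{PPS}}=(\Sigma+\mathcal P_1)^{-1}(\Sigma-\mathcal P_2)(\Sigma+\mathcal P_2)^{-1}(\Sigma-\mathcal P_1)$. Set $\tilde{\mathcal P}_i=\Sigma^{-1/2}\mathcal P_i\Sigma^{-1/2}$ ($i=1,2$), $\tilde{\mathcal P}_+=(\mathcal I+\tilde{\mathcal P}_2)(\mathcal I+\tilde{\mathcal P}_1)$, $\tilde{\mathcal P}_-=(\mathcal I-\tilde{\mathcal P}_2)(\mathcal I-\tilde{\mathcal P}_1)$. *)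

theory Defs
  imports "Jordan_Normal_Form.Spectral_Radius" "Jordan_Normal_Form.Schur_Decomposition"
begin

abbreviation adj :: "complex mat \<Rightarrow> complex mat" where
  "adj A \<equiv> mat_adjoint A"

(* quadratic form x^* H x *)
definition qform :: "complex mat \<Rightarrow> complex vec \<Rightarrow> complex" where
  "qform H x = (H *\<^sub>v x) \<bullet>c x"

definition hermitian_mat :: "complex mat \<Rightarrow> bool" where
  "hermitian_mat H \<longleftrightarrow> adj H = H"

definition hermitian_psd :: "nat \<Rightarrow> complex mat \<Rightarrow> bool" where
  "hermitian_psd n H \<longleftrightarrow> H \<in> carrier_mat n n \<and> hermitian_mat H \<and>
     (\<forall>x \<in> carrier_vec n. Re (qform H x) \<ge> 0)"

definition hermitian_pd :: "nat \<Rightarrow> complex mat \<Rightarrow> bool" where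
  "hermitian_pd n H \<longleftrightarrow> H \<in> carrier_mat n n \<and> hermitian_mat H \<and>
     (\<forall>x \<in> carrier_vec n. x \<noteq> 0\<^sub>v n \<longrightarrow> Re (qform H x) > 0)"

(* the paper's (non-Hermitian) notion: P + P^* is Hermitian psd *)
definition pos_semidef :: "nat \<Rightarrow> complex mat \<Rightarrow> bool" where
  "pos_semidef n P \<longleftrightarrow> P \<in> carrier_mat n n \<and> hermitian_psd n (P + adj P)"

definition minv :: "nat \<Rightarrow> complex mat \<Rightarrow> complex mat" where
  "minv n A = (THE B. B \<in> carrier_mat n n \<and> A * B = 1\<^sub>m n \<and> B * A = 1\<^sub>m n)"

definition msqrt :: "nat \<Rightarrow> complex mat \<Rightarrow> complex mat" where
  "msqrt n S = (THE R. hermitian_pd n R \<and> R * R = S)"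

definition ev :: "complex mat \<Rightarrow> complex vec set" where
  "ev M = {x. \<exists>k. eigenvector M x k}"

definition Gamma_PPS :: "nat \<Rightarrow> complex mat \<Rightarrow> complex mat \<Rightarrow> complex mat \<Rightarrow> complex mat" where
  "Gamma_PPS n S P1 P2 =
     minv n (S + P1) * (S - P2) * minv n (S + P2) * (S - P1)"

definition tld :: "nat \<Rightarrow> complex mat \<Rightarrow> complex mat \<Rightarrow> complex mat" where
  "tld n S M = minv n (msqrt n S) * M * minv n (msqrt n S)"

definition Pplus :: "nat \<Rightarrow> complex mat \<Rightarrow> complex mat \<Rightarrow> complex mat \<Rightarrow> complex mat" where
  "Pplus n S P1 P2 = (1\<^sub>m n + tld n S P2) * (1\<^sub>m n + tld n S P1)"

definition Pminus :: "nat \<Rightarrow> complex mat \<Rightarrow> complex mat \<Rightarrow> complex mat \<Rightarrow> complex mat" where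
  "Pminus n S P1 P2 = (1\<^sub>m n - tld n S P2) * (1\<^sub>m n - tld n S P1)"

(* r_1(x), r_2(x); the underlying Hermitian forms are real, we take the real part *)
definition r1 :: "nat \<Rightarrow> complex mat \<Rightarrow> complex mat \<Rightarrow> complex mat \<Rightarrow> complex vec \<Rightarrow> real" where
  "r1 n S P1 P2 x = (let At = tld n S (P1 + P2); P1t = tld n S P1; P2t = tld n S P2 in
     Re (qform (1\<^sub>m n + adj At * At + P2t * P1t + adj P1t * adj P2t
                + adj P1t * adj P2t * P2t * P1t) x))"

definition r2 :: "nat \<Rightarrow> complex mat \<Rightarrow> complex mat \<Rightarrow> complex mat \<Rightarrow> complex vec \<Rightarrow> real" where
  "r2 n S P1 P2 x = (let At = tld n S (P1 + P2); P1t = tld n S P1; P2t = tld n S P2 in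
     Re (qform (At + adj At + adj At * P2t * P1t + adj P1t * adj P2t * At) x))"

end

theory Submission
  imports Defs
begin

text \<open>
  Let R be the Hermitian positive definite square root of \<Sigma> and X_i = R^-1 P_i R^-1,
  so that \<Sigma> \<plusminus> P_i = R (I \<plusminus> X_i) R. Because (I + X2)^-1 commutes with I - X2, the PPS
  iteration matrix is similar to M = ((I + X2)(I + X1))^-1 (I - X2)(I - X1), so its spectral
  radius is the largest |\<lambda>| over the eigenpairs (\<lambda>, x) of M. Expanding the definitions gives
  r1(x) \<plusminus> r2(x) = \<parallel>(I \<plusminus> X2)(I \<plusminus> X1) x\<parallel>^2, and the eigen-equation
  (I - X2)(I - X1) x = \<lambda> (I + X2)(I + X1) x turns this into r1 - r2 = |\<lambda>|^2 (r1 + r2).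
  The X_i are accretive, so each I + X_i is injective, whence r1 + r2 > 0, and each Cayley
  transform (I - X_i)(I + X_i)^-1 is a contraction; \<lambda> is an eigenvalue of their product, so
  |\<lambda>| \<le> 1, with equality exactly when r2(x) = 0.

  The square root of \<Sigma> is obtained by diagonalising \<Sigma> with a unitary Schur decomposition; it is
  unique by a trace argument.
\<close>

section \<open>Adjoints, quadratic forms and inverses\<close>

lemma mat_adjoint_dim [simp]:
  "dim_row (adj A) = dim_col A" "dim_col (adj A) = dim_row A"
  unfolding mat_adjoint_def by auto

lemma mat_adjoint_index [simp]:
  "i < dim_col A \<Longrightarrow> j < dim_row A \<Longrightarrow> adj A $$ (i, j) = cnj (A $$ (j, i))"
  unfolding mat_adjoint_def by (simp add: mat_of_rows_index)

lemma mat_adjoint_carrier [simp]: "A \<in> carrier_mat n m \<Longrightarrow> adj A \<in> carrier_mat m n"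
  by auto

lemma mat_adjoint_adjoint [simp]: "adj (adj A) = A"
  by (rule eq_matI) auto

lemma mat_adjoint_one [simp]: "adj (1\<^sub>m n) = 1\<^sub>m n"
  by (rule eq_matI) auto

lemma mat_adjoint_mult:
  assumes "A \<in> carrier_mat n m" "B \<in> carrier_mat m k"
  shows "adj (A * B) = adj B * adj A"
  using assms by (intro eq_matI) (auto simp: scalar_prod_def sum_conjugate intro!: sum.cong)

lemma mat_adjoint_minus:
  assumes "A \<in> carrier_mat n m" "B \<in> carrier_mat n m"
  shows "adj (A - B) = adj A - adj B"
  using assms by (intro eq_matI) auto

lemma mat_adjoint_cscalar_prod:
  assumes "A \<in> carrier_mat n m" "x \<in> carrier_vec n" "y \<in> carrier_vec m"
  shows "(adj A *\<^sub>v x) \<bullet>c y = x \<bullet>c (A *\<^sub>v y)"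
proof -
  have "(adj A *\<^sub>v x) \<bullet>c y = (\<Sum>i<m. (\<Sum>k<n. cnj (A $$ (k, i)) * x $ k) * cnj (y $ i))"
    using assms by (auto simp: scalar_prod_def lessThan_atLeast0 intro!: sum.cong)
  also have "\<dots> = (\<Sum>k<n. x $ k * cnj (\<Sum>i<m. A $$ (k, i) * y $ i))"
    by (simp add: sum_distrib_left sum_distrib_right sum_conjugate mult.commute mult.left_commute
        sum.swap[of _ "{..<m}"])
  also have "\<dots> = x \<bullet>c (A *\<^sub>v y)"
    using assms by (auto simp: scalar_prod_def lessThan_atLeast0 intro!: sum.cong)
  finally show ?thesis .
qed

lemma cnj_cscalar_prod:
  assumes "x \<in> carrier_vec n" "y \<in> carrier_vec n"
  shows "cnj (x \<bullet>c y) = y \<bullet>c x"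
  using assms by (auto simp: scalar_prod_def sum_conjugate lessThan_atLeast0 mult.commute
      intro!: sum.cong)

abbreviation sq_norm_vec :: "complex vec \<Rightarrow> real" where
  "sq_norm_vec v \<equiv> Re (v \<bullet>c v)"

lemma cscalar_prod_self_real: "v \<bullet>c v = complex_of_real (sq_norm_vec v)"
  using conjugate_square_ge_0_vec[of v] by (simp add: less_eq_complex_def complex_eq_iff)

lemma sq_norm_vec_pos:
  assumes "v \<in> carrier_vec n" "v \<noteq> 0\<^sub>v n"
  shows "0 < sq_norm_vec v"
  using conjugate_square_greater_0_vec[OF assms(1)] assms(2) by (simp add: less_complex_def)

lemma sq_norm_vec_smult:
  assumes "v \<in> carrier_vec n"
  shows "sq_norm_vec (k \<cdot>\<^sub>v v) = (cmod k)\<^sup>2 * sq_norm_vec v"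
proof -
  have "(k \<cdot>\<^sub>v v) \<bullet>c (k \<cdot>\<^sub>v v) = (k * cnj k) * (v \<bullet>c v)"
    using assms by (simp add: scalar_prod_smult_distrib smult_scalar_prod_distrib conjugate_smult_vec)
  also have "\<dots> = complex_of_real ((cmod k)\<^sup>2 * sq_norm_vec v)"
    by (subst cscalar_prod_self_real) (simp add: complex_norm_square[symmetric] complex_mult_cnj)
  finally show ?thesis by simp
qed

lemma sq_norm_vec_add_diff:
  assumes u: "u \<in> carrier_vec n" and v: "v \<in> carrier_vec n"
  shows "sq_norm_vec (u + v) = sq_norm_vec u + sq_norm_vec v + 2 * Re (v \<bullet>c u)"
    and "sq_norm_vec (u - v) = sq_norm_vec u + sq_norm_vec v - 2 * Re (v \<bullet>c u)"
proof -
  have sums: "w \<bullet>c z = (\<Sum>i<n. w $ i * cnj (z $ i))" if "w \<in> carrier_vec n" "z \<in> carrier_vec n" for w z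
    using that by (simp add: scalar_prod_def lessThan_atLeast0)
  have "sq_norm_vec (u + v) = (\<Sum>i<n. Re (u $ i * cnj (u $ i)) + Re (v $ i * cnj (v $ i))
      + 2 * Re (v $ i * cnj (u $ i)))"
    using u v by (simp add: sums[of "u + v" "u + v"] Re_sum) (simp add: algebra_simps)
  then show "sq_norm_vec (u + v) = sq_norm_vec u + sq_norm_vec v + 2 * Re (v \<bullet>c u)"
    using u v by (simp add: sums Re_sum sum.distrib sum_distrib_left)
  have "sq_norm_vec (u - v) = (\<Sum>i<n. Re (u $ i * cnj (u $ i)) + Re (v $ i * cnj (v $ i))
      - 2 * Re (v $ i * cnj (u $ i)))"
    using u v by (simp add: sums[of "u - v" "u - v"] Re_sum) (simp add: algebra_simps)
  then show "sq_norm_vec (u - v) = sq_norm_vec u + sq_norm_vec v - 2 * Re (v \<bullet>c u)"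
    using u v by (simp add: sums Re_sum sum.distrib sum_subtractf sum_distrib_left)
qed

declare minus_carrier_mat [simp]

lemma mult_carrier_mat_square [simp]:
  "A \<in> carrier_mat n n \<Longrightarrow> B \<in> carrier_mat n n \<Longrightarrow> A * B \<in> carrier_mat n n"
  by auto

lemma mult_mat_vec_carrier_square [simp]:
  "A \<in> carrier_mat n n \<Longrightarrow> v \<in> carrier_vec n \<Longrightarrow> A *\<^sub>v v \<in> carrier_vec n"
  by auto

lemma one_add_mult_mat_vec:
  fixes X :: "'a :: semiring_1 mat"
  assumes "X \<in> carrier_mat n n" "v \<in> carrier_vec n"
  shows "(1\<^sub>m n + X) *\<^sub>v v = v + X *\<^sub>v v"
  using add_mult_distrib_mat_vec[OF one_carrier_mat assms] assms(2) by simp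

lemma one_minus_mult_mat_vec:
  fixes X :: "'a :: ring_1 mat"
  assumes "X \<in> carrier_mat n n" "v \<in> carrier_vec n"
  shows "(1\<^sub>m n - X) *\<^sub>v v = v - X *\<^sub>v v"
  using minus_mult_distrib_mat_vec[OF one_carrier_mat assms] assms(2) by simp

lemma qform_add:
  assumes "A \<in> carrier_mat n n" "B \<in> carrier_mat n n" "x \<in> carrier_vec n"
  shows "qform (A + B) x = qform A x + qform B x"
  using assms unfolding qform_def by (simp add: add_mult_distrib_mat_vec add_scalar_prod_distrib[of _ n])

lemma qform_adjoint_mult:
  assumes "K \<in> carrier_mat k n" "L \<in> carrier_mat k n" "x \<in> carrier_vec n"
  shows "qform (adj K * L) x = (L *\<^sub>v x) \<bullet>c (K *\<^sub>v x)"
  using assms mat_adjoint_cscalar_prod[of K k n "L *\<^sub>v x" x]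
  by (simp add: qform_def assoc_mult_mat_vec[of _ n k _ n])

lemma qform_congruence:
  assumes "Q \<in> carrier_mat k n" "H \<in> carrier_mat k k" "x \<in> carrier_vec n"
  shows "qform (adj Q * H * Q) x = qform H (Q *\<^sub>v x)"
  using assms qform_adjoint_mult[of Q k n "H * Q" x] by (simp add: qform_def assoc_mult_mat[of _ n k])

lemma qform_adjoint:
  assumes "P \<in> carrier_mat n n" "x \<in> carrier_vec n"
  shows "qform (adj P) x = cnj (qform P x)"
  using assms unfolding qform_def
  by (simp add: mat_adjoint_cscalar_prod[of P n n] cnj_cscalar_prod[of _ n])

lemma qform_unit_vec:
  assumes "T \<in> carrier_mat n n" "i < n"
  shows "qform T (unit_vec n i) = T $$ (i, i)"
proof -
  have "conjugate (unit_vec n i) = (unit_vec n i :: complex vec)"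
    by (rule eq_vecI) (auto simp: unit_vec_def)
  then show ?thesis
    using assms by (simp add: qform_def)
qed

lemma mult_mat_vec_eq_0_left_inverse:
  fixes A :: "'a :: semiring_1 mat"
  assumes "B \<in> carrier_mat n n" "B * A = 1\<^sub>m n" "A \<in> carrier_mat n n" "v \<in> carrier_vec n"
    and "A *\<^sub>v v = 0\<^sub>v n"
  shows "v = 0\<^sub>v n"
proof -
  have "v = (B * A) *\<^sub>v v"
    using assms(2,4) by simp
  also have "\<dots> = B *\<^sub>v 0\<^sub>v n"
    using assms(1,3-5) by simp
  also have "\<dots> = 0\<^sub>v n"
    using assms(1) by auto
  finally show ?thesis .
qed

lemma mult_inverse_cancel:
  fixes A :: "'a :: semiring_1 mat"
  assumes "A * B = 1\<^sub>m n" "A \<in> carrier_mat n n" "B \<in> carrier_mat n n" "X \<in> carrier_mat n m"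
  shows "A * (B * X) = X"
  using assms by (simp add: assoc_mult_mat[of A n n B n X m, symmetric] left_mult_one_mat)

lemma minv_eqI:
  assumes A: "A \<in> carrier_mat n n" and B: "B \<in> carrier_mat n n" and AB: "A * B = 1\<^sub>m n"
  shows "minv n A = B"
  unfolding minv_def
proof (rule the_equality)
  have BA: "B * A = 1\<^sub>m n"
    using mat_mult_left_right_inverse[OF A B AB] .
  then show "B \<in> carrier_mat n n \<and> A * B = 1\<^sub>m n \<and> B * A = 1\<^sub>m n"
    using B AB by blast
  fix C assume C: "C \<in> carrier_mat n n \<and> A * C = 1\<^sub>m n \<and> C * A = 1\<^sub>m n"
  then have "C = (B * A) * C"
    using BA left_mult_one_mat[of C n n] by auto
  also have "\<dots> = B"
    using A B C by (simp add: assoc_mult_mat[of _ n n _ n _ n])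
  finally show "C = B" .
qed

lemma minv_inverse:
  assumes A: "(A :: complex mat) \<in> carrier_mat n n"
    and inj: "\<And>v. v \<in> carrier_vec n \<Longrightarrow> A *\<^sub>v v = 0\<^sub>v n \<Longrightarrow> v = 0\<^sub>v n"
  shows "minv n A \<in> carrier_mat n n" "A * minv n A = 1\<^sub>m n" "minv n A * A = 1\<^sub>m n"
proof -
  have "det A \<noteq> 0"
    using det_0_iff_vec_prod_zero[OF A] inj by auto
  then obtain B where B: "B \<in> carrier_mat n n" "A * B = 1\<^sub>m n"
    using det_non_zero_imp_unit[OF A] unfolding Units_def by (auto simp: ring_mat_simps)
  then show "minv n A \<in> carrier_mat n n" "A * minv n A = 1\<^sub>m n" "minv n A * A = 1\<^sub>m n"
    using minv_eqI[OF A B] mat_mult_left_right_inverse[OF A B] by simp_all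
qed

section \<open>Unitary Schur decomposition\<close>

definition vec_normalize :: "complex vec \<Rightarrow> complex vec" where
  "vec_normalize w = complex_of_real (1 / sqrt (sq_norm_vec w)) \<cdot>\<^sub>v w"

lemma vec_normalize_carrier [simp]: "w \<in> carrier_vec n \<Longrightarrow> vec_normalize w \<in> carrier_vec n"
  unfolding vec_normalize_def by auto

lemma cscalar_prod_vec_normalize:
  assumes "w \<in> carrier_vec n" "u \<in> carrier_vec n"
  shows "vec_normalize w \<bullet>c vec_normalize u
    = complex_of_real (1 / sqrt (sq_norm_vec w) * (1 / sqrt (sq_norm_vec u))) * (w \<bullet>c u)"
  using assms unfolding vec_normalize_def
  by (simp add: scalar_prod_smult_distrib smult_scalar_prod_distrib conjugate_smult_vec)

lemma vec_normalize_unit: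
  assumes w: "w \<in> carrier_vec n" and w0: "w \<noteq> 0\<^sub>v n"
  shows "vec_normalize w \<bullet>c vec_normalize w = 1"
proof -
  have "0 < sq_norm_vec w"
    using sq_norm_vec_pos[OF w w0] .
  then show ?thesis
    unfolding cscalar_prod_vec_normalize[OF w w]
    by (subst (3) cscalar_prod_self_real) (simp add: field_simps flip: of_real_mult)
qed

lemma vec_normalize_id: "w \<bullet>c w = 1 \<Longrightarrow> vec_normalize w = w"
  unfolding vec_normalize_def by simp

lemma corthogonal_map_vec_normalize:
  assumes ws: "set ws \<subseteq> carrier_vec n" "corthogonal ws"
  shows "corthogonal (map vec_normalize ws)" "\<forall>u \<in> set (map vec_normalize ws). u \<bullet>c u = 1"
proof -
  have ws0: "w \<noteq> 0\<^sub>v n" if "w \<in> set ws" for w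
    using that ws unfolding corthogonal_def by (force simp: in_set_conv_nth)
  then show "\<forall>u \<in> set (map vec_normalize ws). u \<bullet>c u = 1"
    using ws by (auto intro: vec_normalize_unit)
  have "vec_normalize (ws ! i) \<bullet>c vec_normalize (ws ! j) = 0 \<longleftrightarrow> ws ! i \<bullet>c ws ! j = 0"
    if "i < length ws" "j < length ws" for i j
  proof -
    have w: "ws ! i \<in> carrier_vec n" "ws ! j \<in> carrier_vec n"
      using that ws by auto
    have "0 < sq_norm_vec (ws ! i)" "0 < sq_norm_vec (ws ! j)"
      using that w ws0 by (auto intro!: sq_norm_vec_pos)
    then show ?thesis
      by (simp add: cscalar_prod_vec_normalize[OF w])
  qed
  then show "corthogonal (map vec_normalize ws)"
    using ws(2) unfolding corthogonal_def by auto
qed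

lemma orthonormal_basis_completion:
  fixes v :: "complex vec"
  assumes v: "v \<in> carrier_vec n" and vv: "v \<bullet>c v = 1"
  obtains us where "length us = n" "set us \<subseteq> carrier_vec n" "corthogonal us"
    "\<forall>u \<in> set us. u \<bullet>c u = 1" "hd us = v"
proof -
  interpret cof_vec_space n "TYPE(complex)" .
  have v0: "v \<noteq> 0\<^sub>v n"
    using vv conjugate_square_eq_0_vec[OF v] by auto
  define b where "b = basis_completion v"
  define ws where "ws = gram_schmidt n b"
  from basis_completion[OF v v0, folded b_def]
  have b: "distinct b" "\<not> lin_dep (set b)" "set b \<subseteq> carrier_vec n" "hd b = v" "length b = n"
    by auto
  moreover have "n \<noteq> 0"
    using v v0 by (auto intro: eq_vecI)
  ultimately obtain vs where bv: "b = v # vs"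
    by (cases b) auto
  from gram_schmidt_result[OF b(3,1,2) refl, folded ws_def]
  have ws: "set ws \<subseteq> carrier_vec n" "corthogonal ws" "length ws = n"
    using b(5) by auto
  have hd_ws: "hd ws = v"
    using gram_schmidt_hd[OF v, of vs] unfolding ws_def bv .
  show ?thesis
  proof
    show "length (map vec_normalize ws) = n" "set (map vec_normalize ws) \<subseteq> carrier_vec n"
      using ws by auto
    show "corthogonal (map vec_normalize ws)" "\<forall>u \<in> set (map vec_normalize ws). u \<bullet>c u = 1"
      using corthogonal_map_vec_normalize[OF ws(1,2)] .
    show "hd (map vec_normalize ws) = v"
      using hd_ws ws(3) v0 vec_normalize_id[OF vv] by (cases ws) auto
  qed
qed

lemma orthonormal_mat_of_cols:
  assumes us: "length us = n" "set us \<subseteq> carrier_vec n" "corthogonal us"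
    and unit: "\<forall>u \<in> set us. u \<bullet>c u = 1"
  defines "W \<equiv> mat_of_cols n us"
  shows "corthogonal_inv W = adj W" "adj W * W = 1\<^sub>m n" "W * adj W = 1\<^sub>m n"
proof -
  have W: "W \<in> carrier_mat n n"
    using us unfolding W_def by auto
  have "map vec_inv (cols W) = map conjugate (cols W)"
    using us unit unfolding W_def by (auto simp: vec_inv_def)
  then show inv: "corthogonal_inv W = adj W"
    unfolding corthogonal_inv_def mat_adjoint_def by (rule arg_cong)
  have "inverts_mat (corthogonal_inv W) W"
    using corthogonal_inv_result orthogonal_mat_of_cols us unfolding W_def by blast
  then show "adj W * W = 1\<^sub>m n"
    using W unfolding inv inverts_mat_def by simp
  then show "W * adj W = 1\<^sub>m n"
    using mat_mult_left_right_inverse[OF mat_adjoint_carrier[OF W] W] by simp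
qed

lemma four_block_first_col:
  assumes A: "A \<in> carrier_mat n n" and n: "n = Suc m"
    and col0: "col A 0 = vec n (\<lambda>i. if i = 0 then e else 0)"
  obtains A2 A3 where "A = four_block_mat (mat 1 1 (\<lambda>_. e)) A2 (0\<^sub>m m 1) A3"
    "A2 \<in> carrier_mat 1 m" "A3 \<in> carrier_mat m m"
proof -
  obtain A1 A2 A0 A3 where split: "split_block A 1 1 = (A1, A2, A0, A3)"
    by (cases "split_block A 1 1")
  have "dim_row A = 1 + m" "dim_col A = 1 + m"
    using A n by auto
  note blocks = split_block[OF split this]
  have "A1 = mat 1 1 (\<lambda>_. e)"
    using split[unfolded split_block_def Let_def] arg_cong[OF col0, of "\<lambda>v. v $ 0"] A n
    by (auto simp: col_def)
  moreover have "A $$ (Suc i, 0) = 0" if "i < m" for i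
    using that arg_cong[OF col0, of "\<lambda>v. v $ Suc i"] A n by auto
  then have "A0 = 0\<^sub>m m 1"
    using split[unfolded split_block_def Let_def] A n by auto
  ultimately show ?thesis
    using that blocks by auto
qed

lemma unitary_deflation:
  assumes A: "(A :: complex mat) \<in> carrier_mat n n" and n: "n = Suc m"
  obtains W e A2 A3 where
    "similar_mat_wit A (four_block_mat (mat 1 1 (\<lambda>_. e)) A2 (0\<^sub>m m 1) A3) W (adj W)"
    "A2 \<in> carrier_mat 1 m" "A3 \<in> carrier_mat m m"
proof -
  obtain e v0 where "eigenvector A v0 e"
    using spectrum_non_empty[OF A] n unfolding spectrum_def eigenvalue_def by auto
  then have v0: "v0 \<in> carrier_vec n" "v0 \<noteq> 0\<^sub>v n" "A *\<^sub>v v0 = e \<cdot>\<^sub>v v0"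
    using A unfolding eigenvector_def by auto
  define v where "v = vec_normalize v0"
  have v: "v \<in> carrier_vec n" "v \<bullet>c v = 1" "v \<noteq> 0\<^sub>v n" "A *\<^sub>v v = e \<cdot>\<^sub>v v"
    using v0 vec_normalize_unit[OF v0(1,2)] mult_mat_vec[OF A v0(1)]
    by (auto simp: v_def vec_normalize_def smult_smult_assoc mult.commute)
  obtain us where us: "length us = n" "set us \<subseteq> carrier_vec n" "corthogonal us"
    "\<forall>u \<in> set us. u \<bullet>c u = 1" "hd us = v"
    using orthonormal_basis_completion[OF v(1,2)] by blast
  define W where "W = mat_of_cols n us"
  note W_unitary = orthonormal_mat_of_cols[OF us(1-4), folded W_def]
  have W: "W \<in> carrier_mat n n"
    using us unfolding W_def by auto
  define A' where "A' = adj W * A * W"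
  have A': "A' \<in> carrier_mat n n"
    using A W unfolding A'_def by auto
  have "W * A' * adj W = (W * adj W) * A * (W * adj W)"
    using A W by (simp add: A'_def assoc_mult_mat[of _ n n _ n _ n])
  then have "A = W * A' * adj W"
    using A W_unitary by simp
  then have sim: "similar_mat_wit A A' W (adj W)"
    using A A' W W_unitary by (intro similar_mat_witI[of _ _ n]) auto
  have col0: "col A' 0 = vec n (\<lambda>i. if i = 0 then e else 0)"
    using corthogonal_col_ev_0[OF A v(1,3,4) _ us(5,2,3,1)] n W_unitary(1)
    unfolding A'_def W_def by simp
  obtain A2 A3 where "A' = four_block_mat (mat 1 1 (\<lambda>_. e)) A2 (0\<^sub>m m 1) A3"
    "A2 \<in> carrier_mat 1 m" "A3 \<in> carrier_mat m m"
    using four_block_first_col A' col0 n by blast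
  then show ?thesis
    using that sim by auto
qed

lemma similar_mat_wit_four_block_unitary:
  assumes A2: "A2 \<in> carrier_mat 1 m" and A3: "A3 \<in> carrier_mat m m"
    and PT: "similar_mat_wit A3 T P (adj P)"
  defines "Q \<equiv> four_block_mat (1\<^sub>m 1) (0\<^sub>m 1 m) (0\<^sub>m m 1) P"
  shows "similar_mat_wit (four_block_mat (mat 1 1 (\<lambda>_. e)) A2 (0\<^sub>m m 1) A3)
    (four_block_mat (mat 1 1 (\<lambda>_. e)) (A2 * P) (0\<^sub>m m 1) T) Q (adj Q)"
proof -
  have P: "P \<in> carrier_mat m m" "P * adj P = 1\<^sub>m m"
    using similar_mat_witD2[OF A3 PT] by auto
  have adj_Q: "adj Q = four_block_mat (1\<^sub>m 1) (0\<^sub>m 1 m) (0\<^sub>m m 1) (adj P)"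
    using P unfolding Q_def by (intro eq_matI) auto
  have "A2 = 1\<^sub>m 1 * (A2 * P) * adj P"
    using A2 P by (simp add: assoc_mult_mat[of _ 1 m _ m _ m])
  moreover have "0\<^sub>m m 1 = P * 0\<^sub>m m 1 * 1\<^sub>m 1"
    using P by simp
  ultimately show ?thesis
    unfolding Q_def adj_Q[unfolded Q_def] using A2 A3 P
    by (intro similar_mat_wit_four_block[OF similar_mat_wit_refl[of _ 1] PT]) auto
qed

text \<open>
  The library's \<open>schur_decomposition\<close> completes eigenvectors by Gram-Schmidt without
  normalising, so its similarity transformations are not unitary.
\<close>

lemma unitary_schur_decomposition:
  assumes "(A :: complex mat) \<in> carrier_mat n n"
  shows "\<exists>P T. similar_mat_wit A T P (adj P) \<and> upper_triangular T"
  using assms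
proof (induction n arbitrary: A)
  case 0
  then have "similar_mat_wit A A (1\<^sub>m 0) (adj (1\<^sub>m 0))" "upper_triangular A"
    using similar_mat_wit_refl[OF 0] by auto
  then show ?case
    by blast
next
  case (Suc m)
  obtain W e A2 A3 where W: "similar_mat_wit A (four_block_mat (mat 1 1 (\<lambda>_. e)) A2 (0\<^sub>m m 1) A3) W (adj W)"
    and A2: "A2 \<in> carrier_mat 1 m" and A3: "A3 \<in> carrier_mat m m"
    by (rule unitary_deflation[OF Suc.prems refl])
  obtain P T where PT: "similar_mat_wit A3 T P (adj P)" and T: "upper_triangular T"
    using Suc.IH[OF A3] by blast
  have P: "P \<in> carrier_mat m m" and T_carrier: "T \<in> carrier_mat m m"
    using similar_mat_witD2[OF A3 PT] by auto
  let ?P = "four_block_mat (1\<^sub>m 1) (0\<^sub>m 1 m) (0\<^sub>m m 1) P"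
  let ?C = "four_block_mat (mat 1 1 (\<lambda>_. e)) (A2 * P) (0\<^sub>m m 1) T"
  have "similar_mat_wit A ?C (W * ?P) (adj ?P * adj W)"
    using similar_mat_wit_trans[OF W similar_mat_wit_four_block_unitary[OF A2 A3 PT]] by blast
  moreover have "adj (W * ?P) = adj ?P * adj W"
    using similar_mat_witD2[OF Suc.prems W] P
    by (intro mat_adjoint_mult[of _ "Suc m" "Suc m"]) auto
  moreover have "upper_triangular ?C"
    using T T_carrier by (intro upper_triangular_four_block) auto
  ultimately show ?case
    by metis
qed

section \<open>Square roots of Hermitian positive definite matrices\<close>

lemma hermitian_pd_qform_nonneg:
  assumes "hermitian_pd n H" "x \<in> carrier_vec n"
  shows "0 \<le> Re (qform H x)"
  using assms unfolding hermitian_pd_def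
  by (cases "x = 0\<^sub>v n") (auto simp: qform_def intro: less_imp_le)

lemma hermitian_pd_congruence:
  assumes H: "hermitian_pd n H" and Q: "Q \<in> carrier_mat n n" and QQ: "adj Q * Q = 1\<^sub>m n"
  shows "hermitian_pd n (adj Q * H * Q)"
proof -
  have Hc: "H \<in> carrier_mat n n" and Hh: "adj H = H"
    using H unfolding hermitian_pd_def hermitian_mat_def by auto
  have "adj (adj Q * H * Q) = adj Q * H * Q"
    using Q Hc mat_adjoint_mult[of "adj Q * H" n n Q n] mat_adjoint_mult[of "adj Q" n n H n]
    by (simp add: Hh assoc_mult_mat[of _ n n _ n _ n])
  moreover have "0 < Re (qform (adj Q * H * Q) x)" if "x \<in> carrier_vec n" "x \<noteq> 0\<^sub>v n" for x
  proof -
    have "Q *\<^sub>v x \<noteq> 0\<^sub>v n"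
      using mult_mat_vec_eq_0_left_inverse[of "adj Q" n Q x] Q QQ that by auto
    then show ?thesis
      using H that Q Hc unfolding qform_congruence[OF Q Hc that(1)] hermitian_pd_def by auto
  qed
  ultimately show ?thesis
    using Q Hc unfolding hermitian_pd_def hermitian_mat_def by auto
qed

lemma hermitian_upper_triangular_diag:
  assumes T: "T \<in> carrier_mat n n" and Th: "hermitian_mat T" and ut: "upper_triangular T"
  shows "T = mat_diag n (\<lambda>i. T $$ (i, i))"
proof (rule eq_matI)
  fix i j assume "i < dim_row (mat_diag n (\<lambda>i. T $$ (i, i)))" "j < dim_col (mat_diag n (\<lambda>i. T $$ (i, i)))"
  then have ij: "i < n" "j < n"
    by (auto simp: mat_diag_def)
  have "T $$ (i, j) = cnj (T $$ (j, i))"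
    using arg_cong[OF Th[unfolded hermitian_mat_def], of "\<lambda>M. M $$ (i, j)"] T ij by auto
  then have "T $$ (i, j) = 0" if "i \<noteq> j"
    using ut T ij that unfolding upper_triangular_def by (cases "j < i") auto
  then show "T $$ (i, j) = mat_diag n (\<lambda>i. T $$ (i, i)) $$ (i, j)"
    using ij by (auto simp: mat_diag_def)
qed (use T in \<open>auto simp: mat_diag_def\<close>)

lemma hermitian_pd_diag_pos:
  assumes T: "hermitian_pd n T" and i: "i < n"
  shows "T $$ (i, i) = complex_of_real (Re (T $$ (i, i)))" "0 < Re (T $$ (i, i))"
proof -
  have Tc: "T \<in> carrier_mat n n" and Th: "adj T = T"
    using T unfolding hermitian_pd_def hermitian_mat_def by auto
  have "T $$ (i, i) = cnj (T $$ (i, i))"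
    using arg_cong[OF Th, of "\<lambda>M. M $$ (i, i)"] Tc i by auto
  then show "T $$ (i, i) = complex_of_real (Re (T $$ (i, i)))"
    by (metis Reals_cnj_iff complex_is_Real_iff of_real_Re)
  show "0 < Re (T $$ (i, i))"
    using T i unit_vec_nonzero[of i n] unfolding hermitian_pd_def qform_unit_vec[OF Tc i, symmetric]
    by (metis unit_vec_carrier)
qed

lemma qform_mat_diag:
  assumes "x \<in> carrier_vec n"
  shows "qform (mat_diag n (\<lambda>i. complex_of_real (d i))) x
    = complex_of_real (\<Sum>i<n. d i * (cmod (x $ i))\<^sup>2)"
proof -
  have "(mat_diag n (\<lambda>i. complex_of_real (d i)) *\<^sub>v x) $ i = d i * x $ i" if "i < n" for i
    using that assms by (auto simp: mat_diag_def scalar_prod_def sum.remove[of _ i])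
  then have "qform (mat_diag n (\<lambda>i. complex_of_real (d i))) x
      = (\<Sum>i<n. complex_of_real (d i) * (x $ i * cnj (x $ i)))"
    using assms by (auto simp: qform_def scalar_prod_def lessThan_atLeast0 intro!: sum.cong)
  then show ?thesis
    by (simp flip: complex_norm_square)
qed

lemma hermitian_pd_mat_diag:
  assumes d: "\<forall>i<n. 0 < d i"
  shows "hermitian_pd n (mat_diag n (\<lambda>i. complex_of_real (d i)))"
  unfolding hermitian_pd_def hermitian_mat_def
proof (intro conjI ballI impI)
  show "adj (mat_diag n (\<lambda>i. complex_of_real (d i))) = mat_diag n (\<lambda>i. complex_of_real (d i))"
    by (rule eq_matI) (auto simp: mat_diag_def)
  fix x :: "complex vec" assume x: "x \<in> carrier_vec n" "x \<noteq> 0\<^sub>v n"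
  then obtain i where i: "i < n" "x $ i \<noteq> 0"
    by (metis carrier_vecD eq_vecI index_zero_vec)
  have "0 < (\<Sum>j<n. d j * (cmod (x $ j))\<^sup>2)"
    using d i by (intro sum_pos2[of _ i]) auto
  then show "0 < Re (qform (mat_diag n (\<lambda>i. complex_of_real (d i))) x)"
    using qform_mat_diag[OF x(1)] by simp
qed simp

lemma hermitian_pd_upper_triangular_sqrt:
  assumes T: "hermitian_pd n T" and ut: "upper_triangular T"
  obtains D where "hermitian_pd n D" "D * D = T"
proof
  define D where "D = mat_diag n (\<lambda>i. complex_of_real (sqrt (Re (T $$ (i, i)))))"
  show "hermitian_pd n D"
    using hermitian_pd_diag_pos(2)[OF T] unfolding D_def by (auto intro!: hermitian_pd_mat_diag)
  have "D * D = mat_diag n (\<lambda>i. complex_of_real (sqrt (Re (T $$ (i, i))))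
      * complex_of_real (sqrt (Re (T $$ (i, i)))))"
    unfolding D_def by (rule mat_diag_diag)
  also have "\<dots> = mat_diag n (\<lambda>i. T $$ (i, i))"
    using hermitian_pd_diag_pos[OF T]
    by (auto simp: mat_diag_def intro!: eq_matI) (metis abs_of_pos of_real_mult real_sqrt_mult_self)
  also have "\<dots> = T"
    using hermitian_upper_triangular_diag[OF _ _ ut] T unfolding hermitian_pd_def by simp
  finally show "D * D = T" .
qed

lemma hermitian_pd_sqrt_exists:
  assumes S: "hermitian_pd n S"
  shows "\<exists>R. hermitian_pd n R \<and> R * R = S"
proof -
  have Sc: "S \<in> carrier_mat n n"
    using S unfolding hermitian_pd_def by auto
  obtain P T where sim: "similar_mat_wit S T P (adj P)" and ut: "upper_triangular T"
    using unitary_schur_decomposition[OF Sc] by blast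
  note PT = similar_mat_witD2[OF Sc sim]
  have "adj P * S * P = (adj P * P) * T * (adj P * P)"
    using PT(3,5,6) by (simp add: assoc_mult_mat[of _ n n _ n _ n])
  then have "T = adj P * S * P"
    using PT(2,5) by simp
  then have T: "hermitian_pd n T"
    using hermitian_pd_congruence[OF S PT(6,2)] by simp
  obtain D where D: "hermitian_pd n D" "D * D = T"
    using hermitian_pd_upper_triangular_sqrt[OF T ut] by blast
  then have Dc: "D \<in> carrier_mat n n"
    unfolding hermitian_pd_def by auto
  have "adj (adj P) * D * adj P * (adj (adj P) * D * adj P) = P * (D * (adj P * P) * D) * adj P"
    using PT(6) Dc by (simp add: assoc_mult_mat[of _ n n _ n _ n])
  also have "\<dots> = S"
    using PT Dc D(2) by (simp add: assoc_mult_mat[of _ n n _ n _ n])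
  finally show ?thesis
    using hermitian_pd_congruence[OF D(1), of "adj P"] PT by auto
qed

lemma sum_diag_mult_comm:
  fixes A :: "'a :: comm_semiring_0 mat"
  assumes "A \<in> carrier_mat n m" "B \<in> carrier_mat m n"
  shows "(\<Sum>i<n. (A * B) $$ (i, i)) = (\<Sum>j<m. (B * A) $$ (j, j))"
proof -
  have "(\<Sum>i<n. (A * B) $$ (i, i)) = (\<Sum>i<n. \<Sum>j<m. A $$ (i, j) * B $$ (j, i))"
    using assms by (auto simp: scalar_prod_def lessThan_atLeast0 intro!: sum.cong)
  also have "\<dots> = (\<Sum>j<m. \<Sum>i<n. B $$ (j, i) * A $$ (i, j))"
    by (subst sum.swap) (simp add: mult.commute)
  also have "\<dots> = (\<Sum>j<m. (B * A) $$ (j, j))"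
    using assms by (auto simp: scalar_prod_def lessThan_atLeast0 intro!: sum.cong)
  finally show ?thesis .
qed

lemma diag_hermitian_congruence:
  assumes D: "D \<in> carrier_mat n n" "adj D = D" and H: "H \<in> carrier_mat n n" and i: "i < n"
  shows "(D * H * D) $$ (i, i) = qform H (col D i)"
proof -
  have "(D * H * D) $$ (i, i) = (adj D * H * D) $$ (i, i)"
    using D by simp
  also have "\<dots> = qform H (D *\<^sub>v unit_vec n i)"
    using D H i qform_congruence[OF D(1) H, of "unit_vec n i"] qform_unit_vec[of "adj D * H * D" n i]
    by simp
  also have "D *\<^sub>v unit_vec n i = col D i"
    using D i by (intro eq_vecI) auto
  finally show ?thesis .
qed

text \<open>
  For D = R1 - R2 we have R1 D = - D R2, so the traces of D R1 D and D R2 D cancel.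
  Both are sums of quadratic forms in the columns of the Hermitian matrix D, nonnegative
  and, for R1, positive on every nonzero column.
\<close>

lemma hermitian_pd_sqrt_unique:
  assumes R1: "hermitian_pd n R1" and R2: "hermitian_pd n R2" and eq: "R1 * R1 = R2 * R2"
  shows "R1 = R2"
proof -
  have R: "R1 \<in> carrier_mat n n" "R2 \<in> carrier_mat n n" "adj R1 = R1" "adj R2 = R2"
    using R1 R2 unfolding hermitian_pd_def hermitian_mat_def by auto
  define D where "D = R1 - R2"
  have D: "D \<in> carrier_mat n n" "adj D = D"
    using R by (auto simp: D_def mat_adjoint_minus)
  have "R1 * D = - (D * R2)"
    using R eq unfolding D_def
    by (auto simp: mult_minus_distrib_mat[of _ n n] minus_mult_distrib_mat[of _ n n] intro!: eq_matI)
  then have "D * R1 * D = - (D * D * R2)"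
    using R D by (simp add: assoc_mult_mat[of _ n n _ n _ n])
  then have "(\<Sum>i<n. (D * R1 * D) $$ (i, i)) = - (\<Sum>i<n. (D * R2 * D) $$ (i, i))"
    using R D sum_diag_mult_comm[of D n n "D * R2"]
    by (simp add: sum_negf assoc_mult_mat[of _ n n _ n _ n])
  moreover have "(\<Sum>i<n. (D * R * D) $$ (i, i)) = (\<Sum>i<n. qform R (col D i))"
    if "R \<in> carrier_mat n n" for R
    using diag_hermitian_congruence[OF D that] by (intro sum.cong) auto
  ultimately have "(\<Sum>i<n. Re (qform R1 (col D i)) + Re (qform R2 (col D i))) = 0"
    using R by (simp add: sum.distrib flip: Re_sum)
  then have "\<forall>i \<in> {..<n}. Re (qform R1 (col D i)) + Re (qform R2 (col D i)) = 0"
    using R1 R2 D by (subst (asm) sum_nonneg_eq_0_iff) (auto intro!: add_nonneg_nonneg hermitian_pd_qform_nonneg)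
  then have col_zero: "col D i = 0\<^sub>v n" if "i < n" for i
    using that R1 hermitian_pd_qform_nonneg[OF R2, of "col D i"] D
    unfolding hermitian_pd_def by force
  have "R1 $$ (i, j) = R2 $$ (i, j)" if "i < n" "j < n" for i j
  proof -
    have "R1 $$ (i, j) - R2 $$ (i, j) = col D j $ i"
      using R that by (simp add: D_def)
    then show ?thesis
      using col_zero[OF that(2)] that by simp
  qed
  then show ?thesis
    using R by (intro eq_matI) auto
qed

lemma hermitian_pd_msqrt:
  assumes "hermitian_pd n S"
  shows "hermitian_pd n (msqrt n S)" "msqrt n S * msqrt n S = S"
proof -
  have "\<exists>!R. hermitian_pd n R \<and> R * R = S"
    using hermitian_pd_sqrt_exists[OF assms] hermitian_pd_sqrt_unique by metis
  from theI'[OF this] show "hermitian_pd n (msqrt n S)" "msqrt n S * msqrt n S = S"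
    unfolding msqrt_def by auto
qed

lemma hermitian_pd_minv:
  assumes R: "hermitian_pd n R"
  shows "minv n R \<in> carrier_mat n n" "R * minv n R = 1\<^sub>m n" "minv n R * R = 1\<^sub>m n"
    "adj (minv n R) = minv n R"
proof -
  have Rc: "R \<in> carrier_mat n n" and Rh: "adj R = R"
    using R unfolding hermitian_pd_def hermitian_mat_def by auto
  have inj: "v = 0\<^sub>v n" if "v \<in> carrier_vec n" "R *\<^sub>v v = 0\<^sub>v n" for v
    using R that unfolding hermitian_pd_def qform_def by (auto simp: scalar_prod_def)
  note inv = minv_inverse[OF Rc inj]
  then show "minv n R \<in> carrier_mat n n" "R * minv n R = 1\<^sub>m n" "minv n R * R = 1\<^sub>m n"
    by auto
  have "R * adj (minv n R) = 1\<^sub>m n"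
    using mat_adjoint_mult[OF inv(1) Rc] inv(3) Rh by simp
  with minv_eqI[OF Rc] show "adj (minv n R) = minv n R"
    using inv(1) by (metis mat_adjoint_carrier)
qed

section \<open>Accretive matrices and their Cayley transforms\<close>

definition accretive :: "nat \<Rightarrow> complex mat \<Rightarrow> bool" where
  "accretive n X \<longleftrightarrow> X \<in> carrier_mat n n \<and> (\<forall>x \<in> carrier_vec n. 0 \<le> Re (qform X x))"

lemma pos_semidef_congruence_accretive:
  assumes P: "pos_semidef n P" and Q: "Q \<in> carrier_mat n n"
  shows "accretive n (adj Q * P * Q)"
  unfolding accretive_def
proof (intro conjI ballI)
  have Pc: "P \<in> carrier_mat n n"
    using P unfolding pos_semidef_def by auto
  then show "adj Q * P * Q \<in> carrier_mat n n"
    using Q by auto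
  fix x :: "complex vec" assume x: "x \<in> carrier_vec n"
  then have y: "Q *\<^sub>v x \<in> carrier_vec n"
    using Q by auto
  have "Re (qform (P + adj P) (Q *\<^sub>v x)) = 2 * Re (qform P (Q *\<^sub>v x))"
    using qform_add[OF Pc _ y] qform_adjoint[OF Pc y] Pc by simp
  moreover have "0 \<le> Re (qform (P + adj P) (Q *\<^sub>v x))"
    using P y unfolding pos_semidef_def hermitian_psd_def by auto
  ultimately show "0 \<le> Re (qform (adj Q * P * Q) x)"
    using qform_congruence[OF Q Pc x] by simp
qed

lemma accretive_cayley_sq_norm_le:
  assumes X: "accretive n X" and w: "w \<in> carrier_vec n"
  shows "sq_norm_vec ((1\<^sub>m n - X) *\<^sub>v w) \<le> sq_norm_vec ((1\<^sub>m n + X) *\<^sub>v w)"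
proof -
  have Xc: "X \<in> carrier_mat n n" and "0 \<le> Re ((X *\<^sub>v w) \<bullet>c w)"
    using X w unfolding accretive_def qform_def by auto
  then show ?thesis
    using sq_norm_vec_add_diff[OF w mult_mat_vec_carrier[OF Xc w]]
    by (simp add: one_add_mult_mat_vec[OF Xc w] one_minus_mult_mat_vec[OF Xc w])
qed

lemma accretive_one_plus_injective:
  assumes X: "accretive n X" and w: "w \<in> carrier_vec n" and z: "(1\<^sub>m n + X) *\<^sub>v w = 0\<^sub>v n"
  shows "w = 0\<^sub>v n"
proof -
  have Xc: "X \<in> carrier_mat n n" and q: "0 \<le> Re ((X *\<^sub>v w) \<bullet>c w)"
    using X w unfolding accretive_def qform_def by auto
  have "0 = Re (((1\<^sub>m n + X) *\<^sub>v w) \<bullet>c w)"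
    using z w by simp
  also have "\<dots> = sq_norm_vec w + Re ((X *\<^sub>v w) \<bullet>c w)"
    using w Xc by (simp add: one_add_mult_mat_vec add_scalar_prod_distrib[of _ n])
  finally show ?thesis
    using q sq_norm_vec_pos[OF w] by fastforce
qed

lemma accretive_one_plus_minv:
  assumes X: "accretive n X"
  shows "minv n (1\<^sub>m n + X) \<in> carrier_mat n n" "(1\<^sub>m n + X) * minv n (1\<^sub>m n + X) = 1\<^sub>m n"
    "minv n (1\<^sub>m n + X) * (1\<^sub>m n + X) = 1\<^sub>m n"
    "minv n (1\<^sub>m n + X) * (1\<^sub>m n - X) = (1\<^sub>m n - X) * minv n (1\<^sub>m n + X)"
proof -
  have Xc: "X \<in> carrier_mat n n"
    using X unfolding accretive_def by auto
  have C: "1\<^sub>m n + X \<in> carrier_mat n n"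
    using Xc by simp
  show E: "minv n (1\<^sub>m n + X) \<in> carrier_mat n n" "(1\<^sub>m n + X) * minv n (1\<^sub>m n + X) = 1\<^sub>m n"
    "minv n (1\<^sub>m n + X) * (1\<^sub>m n + X) = 1\<^sub>m n"
    using minv_inverse[OF C] accretive_one_plus_injective[OF X] by blast+
  define E where "E = minv n (1\<^sub>m n + X)"
  have "(1\<^sub>m n + X) * (1\<^sub>m n - X) = (1\<^sub>m n - X) + (X - X * X)"
    using add_mult_distrib_mat[of "1\<^sub>m n" n n X "1\<^sub>m n - X" n]
      mult_minus_distrib_mat[OF Xc one_carrier_mat Xc] Xc by simp
  also have "\<dots> = (1\<^sub>m n + X) - (X + X * X)"
    using Xc by (intro eq_matI) auto
  also have "\<dots> = (1\<^sub>m n - X) * (1\<^sub>m n + X)"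
    using minus_mult_distrib_mat[of "1\<^sub>m n" n n X "1\<^sub>m n + X" n]
      mult_add_distrib_mat[OF Xc one_carrier_mat Xc] Xc by simp
  finally have comm: "(1\<^sub>m n + X) * (1\<^sub>m n - X) = (1\<^sub>m n - X) * (1\<^sub>m n + X)" .
  have "E * (1\<^sub>m n - X) = E * ((1\<^sub>m n - X) * (1\<^sub>m n + X)) * E"
    using E Xc by (simp add: E_def assoc_mult_mat[of _ n n _ n _ n])
  also have "\<dots> = (1\<^sub>m n - X) * E"
    using E Xc unfolding comm[symmetric]
    by (simp add: E_def assoc_mult_mat[of _ n n _ n _ n] mult_inverse_cancel[of _ _ n _ n])
  finally show "minv n (1\<^sub>m n + X) * (1\<^sub>m n - X) = (1\<^sub>m n - X) * minv n (1\<^sub>m n + X)"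
    unfolding E_def .
qed

section \<open>The PPS iteration\<close>

lemma tld_congruence:
  assumes "hermitian_pd n S"
  shows "tld n S P = adj (minv n (msqrt n S)) * P * minv n (msqrt n S)"
  using hermitian_pd_minv(4)[OF hermitian_pd_msqrt(1)[OF assms]] by (simp add: tld_def)

lemma accretive_tld:
  assumes "hermitian_pd n S" "pos_semidef n P"
  shows "accretive n (tld n S P)"
  unfolding tld_congruence[OF assms(1)]
  using pos_semidef_congruence_accretive[OF assms(2) hermitian_pd_minv(1)[OF hermitian_pd_msqrt(1)[OF assms(1)]]] .

lemma tld_add:
  assumes "hermitian_pd n S" "P1 \<in> carrier_mat n n" "P2 \<in> carrier_mat n n"
  shows "tld n S (P1 + P2) = tld n S P1 + tld n S P2"
  using assms hermitian_pd_minv(1)[OF hermitian_pd_msqrt(1)[OF assms(1)]]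
  by (simp add: tld_def mult_add_distrib_mat[of _ n n] add_mult_distrib_mat[of _ n n])

lemma msqrt_sandwich:
  assumes S: "hermitian_pd n S" and P: "P \<in> carrier_mat n n"
  shows "S + P = msqrt n S * (1\<^sub>m n + tld n S P) * msqrt n S"
    "S - P = msqrt n S * (1\<^sub>m n - tld n S P) * msqrt n S"
proof -
  define R where "R = msqrt n S"
  have R: "R \<in> carrier_mat n n" "R * R = S"
    using hermitian_pd_msqrt[OF S] unfolding R_def hermitian_pd_def by auto
  note Ri = hermitian_pd_minv[OF hermitian_pd_msqrt(1)[OF S], folded R_def]
  have X: "tld n S P \<in> carrier_mat n n"
    using R Ri P by (simp add: tld_def R_def[symmetric])
  have RXR: "R * tld n S P * R = P"
    using R Ri P
    by (simp add: tld_def R_def[symmetric] assoc_mult_mat[of _ n n _ n _ n] mult_inverse_cancel[of _ _ n _ n])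
  have "R * (1\<^sub>m n + tld n S P) * R = R * R + R * tld n S P * R"
    using R X mult_add_distrib_mat[of R n n "1\<^sub>m n" n "tld n S P"]
      add_mult_distrib_mat[of R n n "R * tld n S P" R n] by simp
  then show "S + P = R * (1\<^sub>m n + tld n S P) * R"
    using R RXR by simp
  have "R * (1\<^sub>m n - tld n S P) * R = R * R - R * tld n S P * R"
    using R X mult_minus_distrib_mat[of R n n "1\<^sub>m n" n "tld n S P"]
      minus_mult_distrib_mat[of R n n "R * tld n S P" R n] by simp
  then show "S - P = R * (1\<^sub>m n - tld n S P) * R"
    using R RXR by simp
qed

lemma minv_sandwich:
  assumes R: "R \<in> carrier_mat n n" "Ri \<in> carrier_mat n n" "R * Ri = 1\<^sub>m n"
    and C: "C \<in> carrier_mat n n" "E \<in> carrier_mat n n" "C * E = 1\<^sub>m n"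
  shows "minv n (R * C * R) = Ri * E * Ri"
  using assms
  by (intro minv_eqI) (auto simp: assoc_mult_mat[of _ n n _ n _ n] mult_inverse_cancel[of _ _ n _ n])

lemma sandwich_product_similar:
  fixes R :: "complex mat"
  assumes carriers: "R \<in> carrier_mat n n" "Ri \<in> carrier_mat n n" "C1 \<in> carrier_mat n n"
    "C2 \<in> carrier_mat n n" "D1 \<in> carrier_mat n n" "D2 \<in> carrier_mat n n"
    "E1 \<in> carrier_mat n n" "E2 \<in> carrier_mat n n"
    and inv: "R * Ri = 1\<^sub>m n" "Ri * R = 1\<^sub>m n" "C1 * E1 = 1\<^sub>m n" "C2 * E2 = 1\<^sub>m n"
    and comm: "E2 * D2 = D2 * E2"
  shows "minv n (C2 * C1) = E1 * E2"
    "minv n (R * C1 * R) * (R * D2 * R) * minv n (R * C2 * R) * (R * D1 * R)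
      = Ri * (minv n (C2 * C1) * (D2 * D1)) * R"
proof -
  show minv: "minv n (C2 * C1) = E1 * E2"
    using carriers inv
    by (intro minv_eqI) (auto simp: assoc_mult_mat[of _ n n _ n _ n] mult_inverse_cancel[of _ _ n _ n])
  have "minv n (R * C1 * R) * (R * D2 * R) * minv n (R * C2 * R) * (R * D1 * R)
      = Ri * E1 * Ri * (R * D2 * R) * (Ri * E2 * Ri) * (R * D1 * R)"
    unfolding minv_sandwich[OF carriers(1,2) inv(1) carriers(3,7) inv(3)]
      minv_sandwich[OF carriers(1,2) inv(1) carriers(4,8) inv(4)] ..
  also have "\<dots> = Ri * (E1 * (D2 * E2) * D1) * R"
    using carriers inv by (simp add: assoc_mult_mat[of _ n n _ n _ n] mult_inverse_cancel[of _ _ n _ n])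
  also have "\<dots> = Ri * (minv n (C2 * C1) * (D2 * D1)) * R"
    using carriers unfolding minv comm[symmetric] by (simp add: assoc_mult_mat[of _ n n _ n _ n])
  finally show "minv n (R * C1 * R) * (R * D2 * R) * minv n (R * C2 * R) * (R * D1 * R)
      = Ri * (minv n (C2 * C1) * (D2 * D1)) * R" .
qed

lemma Gamma_PPS_similar:
  assumes S: "hermitian_pd n S" and P1: "pos_semidef n P1" and P2: "pos_semidef n P2"
  shows "similar_mat (Gamma_PPS n S P1 P2) (minv n (Pplus n S P1 P2) * Pminus n S P1 P2)"
    "minv n (Pplus n S P1 P2) * Pminus n S P1 P2 \<in> carrier_mat n n"
proof -
  define R where "R = msqrt n S"
  define X1 where "X1 = tld n S P1"
  define X2 where "X2 = tld n S P2"
  have R: "R \<in> carrier_mat n n" "minv n R \<in> carrier_mat n n" "R * minv n R = 1\<^sub>m n" "minv n R * R = 1\<^sub>m n"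
    using hermitian_pd_msqrt(1)[OF S] hermitian_pd_minv[OF hermitian_pd_msqrt(1)[OF S]]
    unfolding R_def hermitian_pd_def by auto
  have P: "P1 \<in> carrier_mat n n" "P2 \<in> carrier_mat n n"
    using P1 P2 unfolding pos_semidef_def by auto
  note X = accretive_tld[OF S P1, folded X1_def] accretive_tld[OF S P2, folded X2_def]
  have Xc: "X1 \<in> carrier_mat n n" "X2 \<in> carrier_mat n n"
    using X unfolding accretive_def by auto
  note E1 = accretive_one_plus_minv[OF X(1)] and E2 = accretive_one_plus_minv[OF X(2)]
  note alg = sandwich_product_similar[OF R(1,2) _ _ _ _ E1(1) E2(1) R(3,4) E1(2) E2(2) E2(4)]
  define M where "M = minv n (Pplus n S P1 P2) * Pminus n S P1 P2"
  have M: "M \<in> carrier_mat n n"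
    using Xc E1(1) E2(1) alg(1)
    by (simp add: M_def Pplus_def Pminus_def X1_def[symmetric] X2_def[symmetric])
  have "Gamma_PPS n S P1 P2 = minv n R * M * R"
    using Xc alg(2)
    by (simp add: Gamma_PPS_def msqrt_sandwich[OF S P(1)] msqrt_sandwich[OF S P(2)] M_def Pplus_def
        Pminus_def R_def[symmetric] X1_def[symmetric] X2_def[symmetric])
  then have "similar_mat_wit (Gamma_PPS n S P1 P2) M (minv n R) R"
    using R M by (intro similar_mat_witI[of _ _ n]) auto
  then show "similar_mat (Gamma_PPS n S P1 P2) (minv n (Pplus n S P1 P2) * Pminus n S P1 P2)"
    "minv n (Pplus n S P1 P2) * Pminus n S P1 P2 \<in> carrier_mat n n"
    using M unfolding similar_mat_def M_def by auto
qed

lemma Re_cscalar_prod_swap: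
  assumes "u \<in> carrier_vec n" "v \<in> carrier_vec n"
  shows "Re (u \<bullet>c v) = Re (v \<bullet>c u)"
  using arg_cong[OF cnj_cscalar_prod[OF assms], of Re] by simp

lemma Re_qform_r1_matrix:
  assumes X: "X1 \<in> carrier_mat n n" "X2 \<in> carrier_mat n n" and x: "x \<in> carrier_vec n"
  shows "Re (qform (1\<^sub>m n + adj (X1 + X2) * (X1 + X2) + X2 * X1 + adj X1 * adj X2
      + adj X1 * adj X2 * X2 * X1) x)
    = sq_norm_vec (x + X2 *\<^sub>v (X1 *\<^sub>v x)) + sq_norm_vec ((X1 + X2) *\<^sub>v x)"
proof -
  define A where "A = X1 + X2"
  define B where "B = X2 * X1"
  have c: "A \<in> carrier_mat n n" "B \<in> carrier_mat n n"
    using X by (auto simp: A_def B_def)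
  have "adj X1 * adj X2 = adj B"
    using X by (simp add: B_def mat_adjoint_mult)
  then have "1\<^sub>m n + adj A * A + X2 * X1 + adj X1 * adj X2 + adj X1 * adj X2 * X2 * X1
      = 1\<^sub>m n + adj A * A + B + adj B + adj B * B"
    using X by (simp add: B_def assoc_mult_mat[of _ n n _ n _ n])
  moreover have "B *\<^sub>v x = X2 *\<^sub>v (X1 *\<^sub>v x)"
    using X x by (simp add: B_def)
  ultimately show ?thesis
    using X c x sq_norm_vec_add_diff(1)[of x n "B *\<^sub>v x"]
      Re_cscalar_prod_swap[of x n "B *\<^sub>v x"]
    by (simp add: A_def[symmetric] qform_add[of _ n] qform_adjoint qform_adjoint_mult[of _ n n]
        qform_def[of "1\<^sub>m n"] qform_def[of B])
qed

lemma Re_qform_r2_matrix: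
  assumes X: "X1 \<in> carrier_mat n n" "X2 \<in> carrier_mat n n" and x: "x \<in> carrier_vec n"
  shows "Re (qform ((X1 + X2) + adj (X1 + X2) + adj (X1 + X2) * X2 * X1
      + adj X1 * adj X2 * (X1 + X2)) x)
    = 2 * Re (((X1 + X2) *\<^sub>v x) \<bullet>c (x + X2 *\<^sub>v (X1 *\<^sub>v x)))"
proof -
  define A where "A = X1 + X2"
  define B where "B = X2 * X1"
  have c: "A \<in> carrier_mat n n" "B \<in> carrier_mat n n"
    using X by (auto simp: A_def B_def)
  have "adj X1 * adj X2 = adj B"
    using X by (simp add: B_def mat_adjoint_mult)
  then have "A + adj A + adj A * X2 * X1 + adj X1 * adj X2 * A = A + adj A + adj A * B + adj B * A"
    using X c by (simp add: B_def assoc_mult_mat[of _ n n _ n _ n])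
  moreover have "B *\<^sub>v x = X2 *\<^sub>v (X1 *\<^sub>v x)"
    using X x by (simp add: B_def)
  moreover have "(A *\<^sub>v x) \<bullet>c (x + B *\<^sub>v x) = (A *\<^sub>v x) \<bullet>c x + (A *\<^sub>v x) \<bullet>c (B *\<^sub>v x)"
    using c x by (simp add: conjugate_add_vec[of _ n] scalar_prod_add_distrib[of _ n])
  ultimately show ?thesis
    using X c x Re_cscalar_prod_swap[of "A *\<^sub>v x" n "B *\<^sub>v x"]
    by (simp add: A_def[symmetric] qform_add[of _ n] qform_adjoint qform_adjoint_mult[of _ n n]
        qform_def[of A] qform_def[of B])
qed

lemma cayley_product_mult_vec:
  fixes X1 X2 :: "'a :: comm_ring_1 mat"
  assumes X: "X1 \<in> carrier_mat n n" "X2 \<in> carrier_mat n n" and x: "x \<in> carrier_vec n"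
  shows "((1\<^sub>m n + X2) * (1\<^sub>m n + X1)) *\<^sub>v x = (x + X2 *\<^sub>v (X1 *\<^sub>v x)) + (X1 + X2) *\<^sub>v x"
    "((1\<^sub>m n - X2) * (1\<^sub>m n - X1)) *\<^sub>v x = (x + X2 *\<^sub>v (X1 *\<^sub>v x)) - (X1 + X2) *\<^sub>v x"
proof -
  have "((1\<^sub>m n + X2) * (1\<^sub>m n + X1)) *\<^sub>v x = (1\<^sub>m n + X2) *\<^sub>v ((1\<^sub>m n + X1) *\<^sub>v x)"
    "((1\<^sub>m n - X2) * (1\<^sub>m n - X1)) *\<^sub>v x = (1\<^sub>m n - X2) *\<^sub>v ((1\<^sub>m n - X1) *\<^sub>v x)"
    using X x by (auto intro!: assoc_mult_mat_vec)
  then show "((1\<^sub>m n + X2) * (1\<^sub>m n + X1)) *\<^sub>v x = (x + X2 *\<^sub>v (X1 *\<^sub>v x)) + (X1 + X2) *\<^sub>v x"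
    "((1\<^sub>m n - X2) * (1\<^sub>m n - X1)) *\<^sub>v x = (x + X2 *\<^sub>v (X1 *\<^sub>v x)) - (X1 + X2) *\<^sub>v x"
    using X x
    by (simp_all add: one_add_mult_mat_vec one_minus_mult_mat_vec add_mult_distrib_mat_vec[of _ n n]
        mult_add_distrib_mat_vec[of _ n n] mult_minus_distrib_mat_vec[of _ n n])
      (auto intro!: eq_vecI)
qed

lemma r1_r2_sq_norm:
  assumes S: "hermitian_pd n S" and P1: "pos_semidef n P1" and P2: "pos_semidef n P2"
    and x: "x \<in> carrier_vec n"
  shows "r1 n S P1 P2 x + r2 n S P1 P2 x = sq_norm_vec (Pplus n S P1 P2 *\<^sub>v x)"
    "r1 n S P1 P2 x - r2 n S P1 P2 x = sq_norm_vec (Pminus n S P1 P2 *\<^sub>v x)"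
proof -
  define X1 where "X1 = tld n S P1"
  define X2 where "X2 = tld n S P2"
  have X: "X1 \<in> carrier_mat n n" "X2 \<in> carrier_mat n n"
    using accretive_tld[OF S P1] accretive_tld[OF S P2] unfolding X1_def X2_def accretive_def by auto
  have "tld n S (P1 + P2) = X1 + X2"
    using tld_add[OF S] P1 P2 unfolding X1_def X2_def pos_semidef_def by auto
  then have r1: "r1 n S P1 P2 x = sq_norm_vec (x + X2 *\<^sub>v (X1 *\<^sub>v x)) + sq_norm_vec ((X1 + X2) *\<^sub>v x)"
    and r2: "r2 n S P1 P2 x = 2 * Re (((X1 + X2) *\<^sub>v x) \<bullet>c (x + X2 *\<^sub>v (X1 *\<^sub>v x)))"
    unfolding r1_def r2_def Let_def X1_def[symmetric] X2_def[symmetric]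
    using Re_qform_r1_matrix[OF X x] Re_qform_r2_matrix[OF X x] by simp_all
  have v: "x + X2 *\<^sub>v (X1 *\<^sub>v x) \<in> carrier_vec n" "(X1 + X2) *\<^sub>v x \<in> carrier_vec n"
    using X x by simp_all
  show "r1 n S P1 P2 x + r2 n S P1 P2 x = sq_norm_vec (Pplus n S P1 P2 *\<^sub>v x)"
    "r1 n S P1 P2 x - r2 n S P1 P2 x = sq_norm_vec (Pminus n S P1 P2 *\<^sub>v x)"
    unfolding Pplus_def Pminus_def X1_def[symmetric] X2_def[symmetric] cayley_product_mult_vec[OF X x]
      sq_norm_vec_add_diff[OF v] r1 r2 by simp_all
qed

lemma accretive_cayley_contraction:
  assumes X: "accretive n X" and y: "y \<in> carrier_vec n"
  shows "sq_norm_vec (((1\<^sub>m n - X) * minv n (1\<^sub>m n + X)) *\<^sub>v y) \<le> sq_norm_vec y"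
proof -
  have Xc: "X \<in> carrier_mat n n"
    using X unfolding accretive_def by auto
  note E = accretive_one_plus_minv[OF X]
  define z where "z = minv n (1\<^sub>m n + X) *\<^sub>v y"
  have z: "z \<in> carrier_vec n" "(1\<^sub>m n + X) *\<^sub>v z = y"
    using E Xc y by (simp_all add: z_def flip: assoc_mult_mat_vec[of _ n n _ n])
  have "((1\<^sub>m n - X) * minv n (1\<^sub>m n + X)) *\<^sub>v y = (1\<^sub>m n - X) *\<^sub>v z"
    using E(1) Xc y by (simp add: z_def assoc_mult_mat_vec[of _ n n _ n])
  then show ?thesis
    using accretive_cayley_sq_norm_le[OF X z(1)] z(2) by simp
qed

lemma cayley_product_eigenvalue_le_1:
  assumes X1: "accretive n X1" and X2: "accretive n X2"
    and x: "x \<in> carrier_vec n" "x \<noteq> 0\<^sub>v n"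
    and eq: "((1\<^sub>m n - X2) * (1\<^sub>m n - X1)) *\<^sub>v x = k \<cdot>\<^sub>v (((1\<^sub>m n + X2) * (1\<^sub>m n + X1)) *\<^sub>v x)"
  shows "cmod k \<le> 1"
proof -
  have Xc: "X1 \<in> carrier_mat n n" "X2 \<in> carrier_mat n n"
    using X1 X2 unfolding accretive_def by auto
  note E2 = accretive_one_plus_minv[OF X2]
  txt \<open>With w = (I + X1) x, the eigen-equation says that k is an eigenvalue of the product of
    the Cayley transforms (I - X2)(I + X2)^-1 and (I - X1)(I + X1)^-1.\<close>
  define w where "w = (1\<^sub>m n + X1) *\<^sub>v x"
  define y where "y = (1\<^sub>m n - X1) *\<^sub>v x"
  have wy: "w \<in> carrier_vec n" "y \<in> carrier_vec n"
    using Xc x by (simp_all add: w_def y_def)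
  have "w \<noteq> 0\<^sub>v n"
    using accretive_one_plus_injective[OF X1 x(1)] x(2) unfolding w_def by blast
  then have w_pos: "0 < sq_norm_vec w"
    using sq_norm_vec_pos[OF wy(1)] by blast
  have "((1\<^sub>m n - X2) * minv n (1\<^sub>m n + X2)) *\<^sub>v y = minv n (1\<^sub>m n + X2) *\<^sub>v ((1\<^sub>m n - X2) *\<^sub>v y)"
    unfolding E2(4)[symmetric] using E2(1) Xc wy by (simp add: assoc_mult_mat_vec[of _ n n _ n])
  also have "\<dots> = minv n (1\<^sub>m n + X2) *\<^sub>v (k \<cdot>\<^sub>v ((1\<^sub>m n + X2) *\<^sub>v w))"
    using eq Xc x by (simp add: y_def w_def assoc_mult_mat_vec[of _ n n _ n])
  also have "\<dots> = k \<cdot>\<^sub>v w"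
    using E2(1,3) Xc wy by (simp add: mult_mat_vec[of _ n n] flip: assoc_mult_mat_vec[of _ n n _ n])
  finally have "(cmod k)\<^sup>2 * sq_norm_vec w \<le> sq_norm_vec y"
    using accretive_cayley_contraction[OF X2 wy(2)] sq_norm_vec_smult[OF wy(1)] by simp
  also have "\<dots> \<le> sq_norm_vec w"
    using accretive_cayley_sq_norm_le[OF X1 x(1)] unfolding w_def y_def .
  finally have "(cmod k)\<^sup>2 \<le> 1"
    using w_pos by (simp add: mult_le_cancel_right1)
  then show ?thesis
    by (simp add: power_le_one_iff)
qed

lemma accretive_cayley_product_injective:
  assumes X1: "accretive n X1" and X2: "accretive n X2"
    and v: "v \<in> carrier_vec n" "((1\<^sub>m n + X2) * (1\<^sub>m n + X1)) *\<^sub>v v = 0\<^sub>v n"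
  shows "v = 0\<^sub>v n"
proof -
  have Xc: "X1 \<in> carrier_mat n n" "X2 \<in> carrier_mat n n"
    using X1 X2 unfolding accretive_def by auto
  then have "(1\<^sub>m n + X2) *\<^sub>v ((1\<^sub>m n + X1) *\<^sub>v v) = 0\<^sub>v n"
    using v by (simp add: assoc_mult_mat_vec[of _ n n _ n])
  then have "(1\<^sub>m n + X1) *\<^sub>v v = 0\<^sub>v n"
    using accretive_one_plus_injective[OF X2] v Xc by simp
  then show ?thesis
    using accretive_one_plus_injective[OF X1 v(1)] by blast
qed

lemma cayley_product_eigenvector:
  assumes X1: "accretive n X1" and X2: "accretive n X2"
    and ev: "eigenvector (minv n ((1\<^sub>m n + X2) * (1\<^sub>m n + X1)) * ((1\<^sub>m n - X2) * (1\<^sub>m n - X1))) x k"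
  shows "x \<in> carrier_vec n" "0 < sq_norm_vec (((1\<^sub>m n + X2) * (1\<^sub>m n + X1)) *\<^sub>v x)"
    "sq_norm_vec (((1\<^sub>m n - X2) * (1\<^sub>m n - X1)) *\<^sub>v x)
      = (cmod k)\<^sup>2 * sq_norm_vec (((1\<^sub>m n + X2) * (1\<^sub>m n + X1)) *\<^sub>v x)"
    "cmod k \<le> 1"
proof -
  have Xc: "X1 \<in> carrier_mat n n" "X2 \<in> carrier_mat n n"
    using X1 X2 unfolding accretive_def by auto
  define C where "C = (1\<^sub>m n + X2) * (1\<^sub>m n + X1)"
  define D where "D = (1\<^sub>m n - X2) * (1\<^sub>m n - X1)"
  have CD: "C \<in> carrier_mat n n" "D \<in> carrier_mat n n"
    using Xc by (auto simp: C_def D_def)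
  have C_inj: "v = 0\<^sub>v n" if "v \<in> carrier_vec n" "C *\<^sub>v v = 0\<^sub>v n" for v
    using accretive_cayley_product_injective[OF X1 X2 that[unfolded C_def]] .
  have C_inv: "minv n C \<in> carrier_mat n n" "C * minv n C = 1\<^sub>m n"
    using minv_inverse[OF CD(1)] C_inj by blast+
  have x: "x \<in> carrier_vec n" "x \<noteq> 0\<^sub>v n" "(minv n C * D) *\<^sub>v x = k \<cdot>\<^sub>v x"
    using ev CD C_inv(1) unfolding eigenvector_def C_def[symmetric] D_def[symmetric] by auto
  have "D *\<^sub>v x = (C * (minv n C * D)) *\<^sub>v x"
    using mult_inverse_cancel[OF C_inv(2) CD(1) C_inv(1) CD(2)] by simp
  also have "\<dots> = k \<cdot>\<^sub>v (C *\<^sub>v x)"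
    using CD C_inv(1) x by (simp add: assoc_mult_mat_vec[of _ n n _ n] mult_mat_vec[of _ n n])
  finally have eq: "D *\<^sub>v x = k \<cdot>\<^sub>v (C *\<^sub>v x)" .
  show "x \<in> carrier_vec n"
    using x(1) .
  have "C *\<^sub>v x \<noteq> 0\<^sub>v n"
    using C_inj x by blast
  then show "0 < sq_norm_vec (((1\<^sub>m n + X2) * (1\<^sub>m n + X1)) *\<^sub>v x)"
    using sq_norm_vec_pos[of "C *\<^sub>v x" n] CD x unfolding C_def by simp
  show "sq_norm_vec (((1\<^sub>m n - X2) * (1\<^sub>m n - X1)) *\<^sub>v x)
      = (cmod k)\<^sup>2 * sq_norm_vec (((1\<^sub>m n + X2) * (1\<^sub>m n + X1)) *\<^sub>v x)"
    using eq sq_norm_vec_smult[of "C *\<^sub>v x" n k] CD x unfolding C_def D_def by simp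
  show "cmod k \<le> 1"
    using cayley_product_eigenvalue_le_1[OF X1 X2 x(1,2)] eq unfolding C_def D_def .
qed

lemma sqrt_diff_div_add_eq:
  fixes a b c :: real
  assumes sum: "0 < a + b" and diff: "a - b = c\<^sup>2 * (a + b)" and c: "0 \<le> c" "c \<le> 1"
  shows "b \<le> a" "0 \<le> b" "0 < a" "sqrt ((a - b) / (a + b)) = c" "b \<noteq> 0 \<longleftrightarrow> c < 1"
proof -
  have c2: "0 \<le> c\<^sup>2" "c\<^sup>2 \<le> 1"
    using c by (auto simp: power_le_one)
  then have "0 \<le> c\<^sup>2 * (a + b)" "c\<^sup>2 * (a + b) \<le> a + b"
    using sum by (auto simp: mult_le_cancel_right1)
  then show "b \<le> a" "0 \<le> b" "0 < a"
    using sum diff by linarith+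
  show "sqrt ((a - b) / (a + b)) = c"
    using sum diff c by simp
  show "b \<noteq> 0 \<longleftrightarrow> c < 1"
  proof
    assume "b \<noteq> 0"
    then show "c < 1"
      using sum diff c(2) by (cases "c = 1") auto
  next
    assume "c < 1"
    moreover have "c * c \<le> c"
      using c by (simp add: mult_left_le)
    ultimately have "c\<^sup>2 * (a + b) < a + b"
      using sum by (simp add: power2_eq_square)
    then show "b \<noteq> 0"
      using diff by linarith
  qed
qed

lemma PPS_eigenvector:
  assumes S: "hermitian_pd n S" and P1: "pos_semidef n P1" and P2: "pos_semidef n P2"
    and ev: "eigenvector (minv n (Pplus n S P1 P2) * Pminus n S P1 P2) x k"
  shows "r2 n S P1 P2 x \<le> r1 n S P1 P2 x" "0 \<le> r2 n S P1 P2 x" "0 < r1 n S P1 P2 x"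
    "sqrt ((r1 n S P1 P2 x - r2 n S P1 P2 x) / (r1 n S P1 P2 x + r2 n S P1 P2 x)) = cmod k"
    "r2 n S P1 P2 x \<noteq> 0 \<longleftrightarrow> cmod k < 1"
proof -
  note X = accretive_tld[OF S P1] accretive_tld[OF S P2]
  note x = cayley_product_eigenvector(1)[OF X ev[unfolded Pplus_def Pminus_def]]
  note facts = cayley_product_eigenvector[OF X ev[unfolded Pplus_def Pminus_def],
      folded Pplus_def Pminus_def, folded r1_r2_sq_norm[OF S P1 P2 x]]
  show "r2 n S P1 P2 x \<le> r1 n S P1 P2 x" "0 \<le> r2 n S P1 P2 x" "0 < r1 n S P1 P2 x"
    "sqrt ((r1 n S P1 P2 x - r2 n S P1 P2 x) / (r1 n S P1 P2 x + r2 n S P1 P2 x)) = cmod k"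
    "r2 n S P1 P2 x \<noteq> 0 \<longleftrightarrow> cmod k < 1"
    using sqrt_diff_div_add_eq[OF facts(2,3) norm_ge_zero facts(4)] by auto
qed

lemma similar_mat_spectrum:
  fixes A :: "'a :: field mat"
  assumes "similar_mat A B"
  shows "spectrum A = spectrum B"
proof -
  obtain n P Q where "{A, B, P, Q} \<subseteq> carrier_mat n n"
    using similar_matD[OF assms] by blast
  then have "eigenvalue A k \<longleftrightarrow> eigenvalue B k" for k
    using eigenvalue_root_char_poly[of A n] eigenvalue_root_char_poly[of B n] char_poly_similar[OF assms]
    by simp
  then show ?thesis
    unfolding spectrum_def by auto
qed

lemma spectral_radius_eq_max_ev:
  assumes A: "A \<in> carrier_mat n n" and n: "0 < n"
    and f: "\<And>x k. eigenvector A x k \<Longrightarrow> f x = cmod k"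
  shows "spectral_radius A \<in> {f x | x. x \<in> ev A}" "\<forall>x \<in> ev A. f x \<le> spectral_radius A"
    "spectral_radius A < 1 \<longleftrightarrow> (\<forall>x \<in> ev A. f x < 1)"
proof -
  obtain k where k: "k \<in> spectrum A" "spectral_radius A = cmod k"
    using spectral_radius_mem_max(1)[OF A n] by auto
  then obtain x where x: "eigenvector A x k"
    unfolding spectrum_def eigenvalue_def by auto
  then have "x \<in> ev A" and "spectral_radius A = f x"
    using f k(2) unfolding ev_def by auto
  then show max: "spectral_radius A \<in> {f x | x. x \<in> ev A}"
    by blast
  show le: "\<forall>x \<in> ev A. f x \<le> spectral_radius A"
  proof
    fix x assume "x \<in> ev A"
    then obtain k where "eigenvector A x k"
      unfolding ev_def by blast
    then have "k \<in> spectrum A" and "f x = cmod k"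
      using f unfolding spectrum_def eigenvalue_def by auto
    then show "f x \<le> spectral_radius A"
      using spectral_radius_mem_max(2)[OF A n] by simp
  qed
  show "spectral_radius A < 1 \<longleftrightarrow> (\<forall>x \<in> ev A. f x < 1)"
    using max le by fastforce
qed

theorem theorem3p4:
  fixes n :: nat and A P1 P2 S :: "complex mat"
  assumes n: "0 < n"
    and A: "A \<in> carrier_mat n n" and nonsing: "invertible_mat A"
    and split: "A = P1 + P2"
    and psd1: "pos_semidef n P1" and psd2: "pos_semidef n P2"
    and hpd: "hermitian_pd n S"
  shows "(\<forall>x \<in> ev (minv n (Pplus n S P1 P2) * Pminus n S P1 P2).
            r1 n S P1 P2 x \<ge> r2 n S P1 P2 x \<and> r2 n S P1 P2 x \<ge> 0 \<and> r1 n S P1 P2 x > 0)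
    \<and> spectral_radius (Gamma_PPS n S P1 P2)
        \<in> {sqrt ((r1 n S P1 P2 x - r2 n S P1 P2 x) / (r1 n S P1 P2 x + r2 n S P1 P2 x)) | x.
              x \<in> ev (minv n (Pplus n S P1 P2) * Pminus n S P1 P2)}
    \<and> (\<forall>x \<in> ev (minv n (Pplus n S P1 P2) * Pminus n S P1 P2).
          sqrt ((r1 n S P1 P2 x - r2 n S P1 P2 x) / (r1 n S P1 P2 x + r2 n S P1 P2 x))
            \<le> spectral_radius (Gamma_PPS n S P1 P2))
    \<and> (spectral_radius (Gamma_PPS n S P1 P2) < 1 \<longleftrightarrow>
         (\<forall>x \<in> ev (minv n (Pplus n S P1 P2) * Pminus n S P1 P2). r2 n S P1 P2 x \<noteq> 0))"
proof -
  define M where "M = minv n (Pplus n S P1 P2) * Pminus n S P1 P2"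
  define f where "f x = sqrt ((r1 n S P1 P2 x - r2 n S P1 P2 x) / (r1 n S P1 P2 x + r2 n S P1 P2 x))" for x
  note sim = Gamma_PPS_similar[OF hpd psd1 psd2, folded M_def]
  have rho: "spectral_radius (Gamma_PPS n S P1 P2) = spectral_radius M"
    unfolding spectral_radius_def similar_mat_spectrum[OF sim(1)] ..
  note eig = PPS_eigenvector[OF hpd psd1 psd2, folded M_def]
  have f_eq: "f x = cmod k" if "eigenvector M x k" for x k
    unfolding f_def using eig(4)[OF that] .
  note max = spectral_radius_eq_max_ev[where f = f, OF sim(2) n f_eq]
  have "(r2 n S P1 P2 x \<le> r1 n S P1 P2 x \<and> 0 \<le> r2 n S P1 P2 x \<and> 0 < r1 n S P1 P2 x)
      \<and> (f x < 1 \<longleftrightarrow> r2 n S P1 P2 x \<noteq> 0)" if "eigenvector M x k" for x k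
    using eig(1-3,5)[OF that] f_eq[OF that] by simp
  then have "\<forall>x \<in> ev M. (r2 n S P1 P2 x \<le> r1 n S P1 P2 x \<and> 0 \<le> r2 n S P1 P2 x \<and> 0 < r1 n S P1 P2 x)
      \<and> (f x < 1 \<longleftrightarrow> r2 n S P1 P2 x \<noteq> 0)"
    unfolding ev_def by blast
  then show ?thesis
    using max unfolding rho M_def[symmetric] f_def[symmetric] by auto
qed

end
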